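(* Let $\mathscr G=(\mathscr V,\mathscr E)$ be a finite connected graph with $N$ vertices and $M\ge0$ an integer. The immediate exchange model $(Y_t)$ on $\mathscr C_{N,M}$ has a unique stationary distribution $\pi_Y$, and $$\lim_{t\to\infty}P_\eta(Y_t=\xi)=\pi_Y(\xi)\quad\text{for all }\xi,\eta\in\mathscr C_{N,M},$$ where $P_\eta$ denotes the law of the process started from $Y_0=\eta$.
   Context: $\mathscr C_{N,M}$ is the set of maps $\xi:\mathscr V\to\mathbb N$ with $\sum_x\xi(x)=M$. The immediate exchange model is the discrete-time Markov chain on $\mathscr C_{N,M}$: at each step an edge $(x,y)\in\mathscr E$ is chosen uniformly at random, independent $U_1$ uniform on $\{0,\dots,Y_t(x)\}$ and $U_2$ uniform on $\{0,\dots,Y_t(y)\}$ are drawn, and $Y_{t+1}(x)=Y_t(x)-U_1+U_2$, $Y_{t+1}(y)=Y_t(y)-U_2+U_1$, $Y_{t+1}(z)=Y_t(z)$ for $z\notin\{x,y\}$. *)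

theory Defs
  imports "HOL-Probability.Probability"
begin

definition finite_connected_graph :: "'a set \<Rightarrow> ('a \<times> 'a) set \<Rightarrow> bool" where
  "finite_connected_graph V E \<longleftrightarrow>
     finite V \<and> V \<noteq> {} \<and> E \<subseteq> V \<times> V \<and> sym E \<and> (\<forall>x. (x, x) \<notin> E) \<and>
     (\<forall>x\<in>V. \<forall>y\<in>V. (x, y) \<in> E\<^sup>*)"

definition configs :: "'a set \<Rightarrow> nat \<Rightarrow> ('a \<Rightarrow> nat) set" where
  "configs V M = {\<xi>. (\<forall>x. x \<notin> V \<longrightarrow> \<xi> x = 0) \<and> (\<Sum>x\<in>V. \<xi> x) = M}"

text \<open>One step of the immediate exchange model. (If E is empty -- only possible for a
  single vertex -- the chain stays put.)\<close>
definition ie_step :: "('a \<times> 'a) set \<Rightarrow> ('a \<Rightarrow> nat) \<Rightarrow> ('a \<Rightarrow> nat) pmf" where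
  "ie_step E \<xi> =
     (if E = {} then return_pmf \<xi> else
      bind_pmf (pmf_of_set E) (\<lambda>(x, y).
      bind_pmf (pmf_of_set {0..\<xi> x}) (\<lambda>u1.
      bind_pmf (pmf_of_set {0..\<xi> y}) (\<lambda>u2.
      return_pmf (\<xi>(x := \<xi> x - u1 + u2, y := \<xi> y - u2 + u1))))))"

fun ie_law :: "('a \<times> 'a) set \<Rightarrow> nat \<Rightarrow> ('a \<Rightarrow> nat) \<Rightarrow> ('a \<Rightarrow> nat) pmf" where
  "ie_law E 0 \<eta> = return_pmf \<eta>"
| "ie_law E (Suc t) \<eta> = bind_pmf (ie_law E t \<eta>) (ie_step E)"

definition ie_stationary :: "'a set \<Rightarrow> ('a \<times> 'a) set \<Rightarrow> nat \<Rightarrow> ('a \<Rightarrow> nat) pmf \<Rightarrow> bool" where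
  "ie_stationary V E M \<pi> \<longleftrightarrow> set_pmf \<pi> \<subseteq> configs V M \<and> bind_pmf \<pi> (ie_step E) = \<pi>"

end

(*
  Doeblin's argument. The exchange step conserves the total wealth, so it is a Markov kernel on the
  finite set C_{N,M}. It is lazy (take U_1 = U_2 = 0), and along a path of the connected graph a
  single coin can be carried to a fixed vertex v, so every configuration reaches the configuration
  with all M coins at v. Laziness at that configuration makes the hitting time uniform: there are
  k and delta > 0 such that every row of the k-step kernel gives mass at least delta to it. Then the
  oscillation max - min of every column of the t-step kernel shrinks by the factor 1 - delta every
  k steps, so all rows converge to a common limit, which is a stationary law; any stationary law
  is invariant under the t-step kernel and hence equals this limit.
*)
theory Submission
  imports Defs
begin

section \<open>Doeblin's theorem for finite Markov kernels\<close>

fun kernel_iter :: "('b \<Rightarrow> 'b pmf) \<Rightarrow> nat \<Rightarrow> 'b \<Rightarrow> 'b pmf" where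
  "kernel_iter K 0 x = return_pmf x"
| "kernel_iter K (Suc t) x = bind_pmf (kernel_iter K t x) K"

definition support_rel :: "('b \<Rightarrow> 'b pmf) \<Rightarrow> ('b \<times> 'b) set" where
  "support_rel K = {(a, b). b \<in> set_pmf (K a)}"

lemma set_pmf_kernel_iter: "set_pmf (kernel_iter K t x) = {y. (x, y) \<in> support_rel K ^^ t}"
  by (induction t) (auto simp: support_rel_def relcomp_unfold)

lemma kernel_iter_add: "kernel_iter K (s + t) x = bind_pmf (kernel_iter K s x) (kernel_iter K t)"
  by (induction t) (simp_all add: bind_return_pmf' bind_assoc_pmf)

lemma bind_kernel_iter_stationary:
  assumes "bind_pmf \<pi> K = \<pi>"
  shows "bind_pmf \<pi> (kernel_iter K t) = \<pi>"
proof (induction t)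
  case (Suc t)
  have "bind_pmf \<pi> (kernel_iter K (Suc t)) = bind_pmf (bind_pmf \<pi> (kernel_iter K t)) K"
    unfolding bind_assoc_pmf by (metis kernel_iter.simps(2))
  also have "\<dots> = \<pi>" using Suc assms by simp
  finally show ?case .
qed (simp add: bind_return_pmf')

lemma pmf_bind_finite_support:
  assumes "finite S" "set_pmf p \<subseteq> S"
  shows "pmf (bind_pmf p f) y = (\<Sum>z\<in>S. pmf p z * pmf (f z) y)"
  unfolding pmf_bind using assms
  by (subst integral_measure_pmf[of S]) auto

lemma weighted_sum_le:
  fixes w f :: "'b \<Rightarrow> real"
  assumes "\<And>z. z \<in> A \<Longrightarrow> 0 \<le> w z" "\<And>z. z \<in> A \<Longrightarrow> f z \<le> c"
  shows "(\<Sum>z\<in>A. w z * f z) \<le> (\<Sum>z\<in>A. w z) * c"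
  unfolding sum_distrib_right by (rule sum_mono) (use assms in \<open>simp add: mult_left_mono\<close>)

lemma weighted_sum_ge:
  fixes w f :: "'b \<Rightarrow> real"
  assumes "\<And>z. z \<in> A \<Longrightarrow> 0 \<le> w z" "\<And>z. z \<in> A \<Longrightarrow> c \<le> f z"
  shows "(\<Sum>z\<in>A. w z) * c \<le> (\<Sum>z\<in>A. w z * f z)"
  unfolding sum_distrib_right by (rule sum_mono) (use assms in \<open>simp add: mult_left_mono\<close>)

lemma relpow_append_loop:
  assumes "(x, z) \<in> R ^^ n" "(z, z) \<in> R"
  shows "(x, z) \<in> R ^^ (n + m)"
  by (induction m) (use assms in auto)

lemma support_rel_rtrancl_closed:
  assumes "\<And>x. x \<in> S \<Longrightarrow> set_pmf (K x) \<subseteq> S" "(x, y) \<in> (support_rel K)\<^sup>*" "x \<in> S"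
  shows "y \<in> S"
  using assms(2,3) by (induction rule: rtrancl_induct) (use assms(1) in \<open>auto simp: support_rel_def\<close>)

locale finite_markov =
  fixes S :: "'b set" and K :: "'b \<Rightarrow> 'b pmf"
  assumes finite_S: "finite S"
    and closed: "x \<in> S \<Longrightarrow> set_pmf (K x) \<subseteq> S"
begin

lemma set_pmf_kernel_iter_subset: "x \<in> S \<Longrightarrow> set_pmf (kernel_iter K t x) \<subseteq> S"
  by (induction t) (auto dest: closed)

lemma pmf_kernel_iter_add:
  assumes "x \<in> S"
  shows "pmf (kernel_iter K (s + t) x) y =
    (\<Sum>z\<in>S. pmf (kernel_iter K s x) z * pmf (kernel_iter K t z) y)"
  unfolding kernel_iter_add
  by (rule pmf_bind_finite_support[OF finite_S set_pmf_kernel_iter_subset[OF assms]])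

lemma sum_pmf_kernel_iter: "x \<in> S \<Longrightarrow> (\<Sum>z\<in>S. pmf (kernel_iter K t x) z) = 1"
  by (rule sum_pmf_eq_1[OF finite_S set_pmf_kernel_iter_subset])

lemma uniform_hitting_time:
  assumes "z0 \<in> set_pmf (K z0)" and "\<And>x. x \<in> S \<Longrightarrow> (x, z0) \<in> (support_rel K)\<^sup>*"
  obtains k where "\<And>x. x \<in> S \<Longrightarrow> z0 \<in> set_pmf (kernel_iter K k x)"
proof -
  obtain n where n: "\<And>x. x \<in> S \<Longrightarrow> (x, z0) \<in> support_rel K ^^ n x"
  proof -
    have "\<forall>x\<in>S. \<exists>n. (x, z0) \<in> support_rel K ^^ n"
      using assms(2) by (simp add: rtrancl_power)
    then show ?thesis using that by metis
  qed
  have "z0 \<in> set_pmf (kernel_iter K (Max (n ` S)) x)" if "x \<in> S" for x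
  proof -
    have "Max (n ` S) = n x + (Max (n ` S) - n x)"
      using finite_S that by simp
    then show ?thesis
      using relpow_append_loop[OF n[OF that], of "Max (n ` S) - n x"] assms(1)
      by (simp add: set_pmf_kernel_iter support_rel_def)
  qed
  then show ?thesis by (rule that)
qed

end

locale doeblin = finite_markov +
  fixes z0 :: 'b and k :: nat
  assumes z0_in_S: "z0 \<in> S"
    and hits_z0: "x \<in> S \<Longrightarrow> z0 \<in> set_pmf (kernel_iter K k x)"
begin

definition col_max :: "nat \<Rightarrow> 'b \<Rightarrow> real" where
  "col_max t y = Max ((\<lambda>x. pmf (kernel_iter K t x) y) ` S)"

definition col_min :: "nat \<Rightarrow> 'b \<Rightarrow> real" where
  "col_min t y = Min ((\<lambda>x. pmf (kernel_iter K t x) y) ` S)"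

definition doeblin_const :: real where
  "doeblin_const = Min ((\<lambda>x. pmf (kernel_iter K k x) z0) ` S)"

lemma S_nonempty: "S \<noteq> {}"
  using z0_in_S by auto

lemma pmf_le_col_max: "x \<in> S \<Longrightarrow> pmf (kernel_iter K t x) y \<le> col_max t y"
  unfolding col_max_def using finite_S by auto

lemma col_min_le_pmf: "x \<in> S \<Longrightarrow> col_min t y \<le> pmf (kernel_iter K t x) y"
  unfolding col_min_def using finite_S by auto

lemma col_max_attained: obtains x where "x \<in> S" "col_max t y = pmf (kernel_iter K t x) y"
proof -
  have "col_max t y \<in> (\<lambda>x. pmf (kernel_iter K t x) y) ` S"
    unfolding col_max_def using finite_S S_nonempty by (intro Max_in) auto
  then show ?thesis using that by blast
qed

lemma col_min_attained: obtains x where "x \<in> S" "col_min t y = pmf (kernel_iter K t x) y"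
proof -
  have "col_min t y \<in> (\<lambda>x. pmf (kernel_iter K t x) y) ` S"
    unfolding col_min_def using finite_S S_nonempty by (intro Min_in) auto
  then show ?thesis using that by blast
qed

lemma col_min_le_col_max: "col_min t y \<le> col_max t y"
  using col_min_le_pmf[OF z0_in_S] pmf_le_col_max[OF z0_in_S] by (rule order_trans)

lemma decseq_col_max: "decseq (\<lambda>t. col_max t y)"
proof (rule decseq_SucI)
  fix t
  obtain x where x: "x \<in> S" "col_max (1 + t) y = pmf (kernel_iter K (1 + t) x) y"
    by (rule col_max_attained)
  have "pmf (kernel_iter K (1 + t) x) y \<le> (\<Sum>z\<in>S. pmf (kernel_iter K 1 x) z) * col_max t y"
    unfolding pmf_kernel_iter_add[OF x(1)] by (rule weighted_sum_le) (auto intro: pmf_le_col_max)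
  then show "col_max (Suc t) y \<le> col_max t y"
    using x by (simp add: sum_pmf_kernel_iter del: kernel_iter.simps)
qed

lemma incseq_col_min: "incseq (\<lambda>t. col_min t y)"
proof (rule incseq_SucI)
  fix t
  obtain x where x: "x \<in> S" "col_min (1 + t) y = pmf (kernel_iter K (1 + t) x) y"
    by (rule col_min_attained)
  have "(\<Sum>z\<in>S. pmf (kernel_iter K 1 x) z) * col_min t y \<le> pmf (kernel_iter K (1 + t) x) y"
    unfolding pmf_kernel_iter_add[OF x(1)] by (rule weighted_sum_ge) (auto intro: col_min_le_pmf)
  then show "col_min t y \<le> col_min (Suc t) y"
    using x by (simp add: sum_pmf_kernel_iter del: kernel_iter.simps)
qed

lemma doeblin_const_le: "x \<in> S \<Longrightarrow> doeblin_const \<le> pmf (kernel_iter K k x) z0"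
  unfolding doeblin_const_def using finite_S by auto

lemma doeblin_const_pos: "0 < doeblin_const"
  unfolding doeblin_const_def using finite_S S_nonempty hits_z0
  by (subst Min_gr_iff) (auto simp: pmf_positive)

lemma doeblin_const_le_1: "doeblin_const \<le> 1"
  using doeblin_const_le[OF z0_in_S] pmf_le_1 by (rule order_trans)

definition doeblin_residual :: "'b \<Rightarrow> 'b \<Rightarrow> real" where
  "doeblin_residual x z = pmf (kernel_iter K k x) z - (if z = z0 then doeblin_const else 0)"

lemma doeblin_residual_nonneg: "x \<in> S \<Longrightarrow> 0 \<le> doeblin_residual x z"
  using doeblin_const_le[of x] by (simp add: doeblin_residual_def)

lemma sum_doeblin_residual: "x \<in> S \<Longrightarrow> (\<Sum>z\<in>S. doeblin_residual x z) = 1 - doeblin_const"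
  using finite_S z0_in_S by (simp add: doeblin_residual_def sum_subtractf sum_pmf_kernel_iter)

lemma pmf_kernel_iter_doeblin_split:
  assumes "x \<in> S"
  shows "pmf (kernel_iter K (k + t) x) y =
    doeblin_const * pmf (kernel_iter K t z0) y + (\<Sum>z\<in>S. doeblin_residual x z * pmf (kernel_iter K t z) y)"
proof -
  have "(\<Sum>z\<in>S. doeblin_residual x z * pmf (kernel_iter K t z) y) =
    (\<Sum>z\<in>S. pmf (kernel_iter K k x) z * pmf (kernel_iter K t z) y) -
    (\<Sum>z\<in>S. if z = z0 then doeblin_const * pmf (kernel_iter K t z) y else 0)"
    unfolding sum_subtractf[symmetric] by (rule sum.cong) (auto simp: doeblin_residual_def left_diff_distrib)
  then show ?thesis
    using finite_S z0_in_S by (simp add: pmf_kernel_iter_add[OF assms])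
qed

lemma oscillation_contract:
  "col_max (k + t) y - col_min (k + t) y \<le> (1 - doeblin_const) * (col_max t y - col_min t y)"
proof -
  obtain x1 where x1: "x1 \<in> S" "col_max (k + t) y = pmf (kernel_iter K (k + t) x1) y"
    by (rule col_max_attained)
  obtain x2 where x2: "x2 \<in> S" "col_min (k + t) y = pmf (kernel_iter K (k + t) x2) y"
    by (rule col_min_attained)
  have "(\<Sum>z\<in>S. doeblin_residual x1 z * pmf (kernel_iter K t z) y) \<le> (1 - doeblin_const) * col_max t y"
    unfolding sum_doeblin_residual[OF x1(1), symmetric]
    by (rule weighted_sum_le) (auto intro: doeblin_residual_nonneg x1 pmf_le_col_max)
  moreover have "(1 - doeblin_const) * col_min t y \<le> (\<Sum>z\<in>S. doeblin_residual x2 z * pmf (kernel_iter K t z) y)"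
    unfolding sum_doeblin_residual[OF x2(1), symmetric]
    by (rule weighted_sum_ge) (auto intro: doeblin_residual_nonneg x2 col_min_le_pmf)
  ultimately show ?thesis
    using x1 x2 by (simp add: pmf_kernel_iter_doeblin_split algebra_simps)
qed

lemma oscillation_decreasing: "s \<le> t \<Longrightarrow> col_max t y - col_min t y \<le> col_max s y - col_min s y"
  using decseqD[OF decseq_col_max] incseqD[OF incseq_col_min] by (simp add: diff_mono)

text \<open>The period is \<open>Suc k\<close> rather than \<open>k\<close> so that \<open>j * Suc k\<close> is strictly increasing in \<open>j\<close> even for \<open>k = 0\<close>.\<close>

lemma oscillation_geometric:
  "col_max (j * Suc k) y - col_min (j * Suc k) y \<le> (1 - doeblin_const) ^ j"
proof (induction j)
  case 0
  have "col_max 0 y \<le> 1" "0 \<le> col_min 0 y"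
    using pmf_le_col_max col_min_le_pmf col_max_attained col_min_attained
    by (metis pmf_le_1 pmf_nonneg)+
  then show ?case by simp
next
  case (Suc j)
  have "col_max (Suc j * Suc k) y - col_min (Suc j * Suc k) y \<le>
      col_max (k + j * Suc k) y - col_min (k + j * Suc k) y"
    by (rule oscillation_decreasing) simp
  also have "\<dots> \<le> (1 - doeblin_const) * (col_max (j * Suc k) y - col_min (j * Suc k) y)"
    by (rule oscillation_contract)
  also have "\<dots> \<le> (1 - doeblin_const) * (1 - doeblin_const) ^ j"
    using Suc.IH doeblin_const_le_1 by (intro mult_left_mono) auto
  finally show ?case by simp
qed

lemma pmf_kernel_iter_converges: obtains l where "\<And>x. x \<in> S \<Longrightarrow> (\<lambda>t. pmf (kernel_iter K t x) y) \<longlonglongrightarrow> l"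
proof -
  obtain a where a: "(\<lambda>t. col_max t y) \<longlonglongrightarrow> a"
    using decseq_convergent[OF decseq_col_max[of y], of "col_min 0 y"]
      col_min_le_col_max incseqD[OF incseq_col_min] by (meson order_trans zero_le)
  obtain b where b: "(\<lambda>t. col_min t y) \<longlonglongrightarrow> b"
    using incseq_convergent[OF incseq_col_min[of y], of "col_max 0 y"]
      col_min_le_col_max decseqD[OF decseq_col_max] by (meson order_trans zero_le)
  have "strict_mono (\<lambda>j. j * Suc k)"
    by (rule strict_monoI) (simp add: add_less_le_mono)
  then have "(\<lambda>j. col_max (j * Suc k) y - col_min (j * Suc k) y) \<longlonglongrightarrow> a - b"
    using LIMSEQ_subseq_LIMSEQ[OF a] LIMSEQ_subseq_LIMSEQ[OF b]
    by (intro tendsto_diff) (auto simp: o_def)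
  moreover have "(\<lambda>j. (1 - doeblin_const) ^ j) \<longlonglongrightarrow> 0"
    using doeblin_const_pos doeblin_const_le_1 by (intro LIMSEQ_power_zero) auto
  ultimately have "a - b \<le> 0"
    using oscillation_geometric by (intro LIMSEQ_le) auto
  moreover have "b \<le> a"
    using col_min_le_col_max by (intro LIMSEQ_le[OF b a]) auto
  ultimately have "(\<lambda>t. col_min t y) \<longlonglongrightarrow> a"
    using b by simp
  then have "(\<lambda>t. pmf (kernel_iter K t x) y) \<longlonglongrightarrow> a" if "x \<in> S" for x
    using a by (rule tendsto_sandwich[rotated 2]) (use col_min_le_pmf pmf_le_col_max that in auto)
  then show ?thesis by (rule that)
qed

definition limit_dist :: "'b \<Rightarrow> real" where
  "limit_dist y = lim (\<lambda>t. pmf (kernel_iter K t z0) y)"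

lemma tendsto_limit_dist: "x \<in> S \<Longrightarrow> (\<lambda>t. pmf (kernel_iter K t x) y) \<longlonglongrightarrow> limit_dist y"
  using pmf_kernel_iter_converges[of y] z0_in_S unfolding limit_dist_def by (metis limI)

lemma limit_dist_nonneg: "0 \<le> limit_dist y"
  by (rule LIMSEQ_le_const[OF tendsto_limit_dist[OF z0_in_S]]) simp

lemma limit_dist_outside:
  assumes "y \<notin> S"
  shows "limit_dist y = 0"
proof -
  have "(\<lambda>t. pmf (kernel_iter K t z0) y) = (\<lambda>t. 0)"
    using set_pmf_kernel_iter_subset[OF z0_in_S] assms by (intro ext) (auto simp: pmf_eq_0_set_pmf)
  then show ?thesis
    using tendsto_limit_dist[OF z0_in_S, of y] by (simp add: LIMSEQ_const_iff)
qed

lemma sum_limit_dist: "(\<Sum>y\<in>S. limit_dist y) = 1"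
proof -
  have "(\<lambda>t. \<Sum>y\<in>S. pmf (kernel_iter K t z0) y) \<longlonglongrightarrow> (\<Sum>y\<in>S. limit_dist y)"
    by (intro tendsto_sum tendsto_limit_dist z0_in_S)
  then show ?thesis
    by (simp add: sum_pmf_kernel_iter[OF z0_in_S] LIMSEQ_const_iff)
qed

definition stationary_dist :: "'b pmf" where
  "stationary_dist = embed_pmf limit_dist"

lemma pmf_stationary_dist: "pmf stationary_dist y = limit_dist y"
  unfolding stationary_dist_def
proof (rule pmf_embed_pmf)
  show "(\<integral>\<^sup>+y. ennreal (limit_dist y) \<partial>count_space UNIV) = 1"
    using sum_limit_dist limit_dist_nonneg
    by (subst nn_integral_count_space'[OF finite_S]) (auto simp: limit_dist_outside sum_ennreal)
qed (rule limit_dist_nonneg)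

lemma set_pmf_stationary_dist: "set_pmf stationary_dist \<subseteq> S"
  using limit_dist_outside by (auto simp: set_pmf_eq pmf_stationary_dist)

lemma bind_stationary_dist: "bind_pmf stationary_dist K = stationary_dist"
proof (rule pmf_eqI)
  fix y
  have "(\<lambda>t. pmf (kernel_iter K (Suc t) z0) y) \<longlonglongrightarrow> limit_dist y"
    using tendsto_limit_dist[OF z0_in_S] by (rule LIMSEQ_Suc)
  moreover have "(\<lambda>t. pmf (kernel_iter K (Suc t) z0) y) \<longlonglongrightarrow> (\<Sum>z\<in>S. limit_dist z * pmf (K z) y)"
    unfolding kernel_iter.simps pmf_bind_finite_support[OF finite_S set_pmf_kernel_iter_subset[OF z0_in_S]]
    by (intro tendsto_sum tendsto_mult_right tendsto_limit_dist z0_in_S)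
  ultimately show "pmf (bind_pmf stationary_dist K) y = pmf stationary_dist y"
    by (simp add: pmf_bind_finite_support[OF finite_S set_pmf_stationary_dist] pmf_stationary_dist LIMSEQ_unique)
qed

lemma stationary_dist_unique:
  assumes "set_pmf \<pi> \<subseteq> S" "bind_pmf \<pi> K = \<pi>"
  shows "\<pi> = stationary_dist"
proof (rule pmf_eqI)
  fix y
  have "pmf \<pi> y = (\<Sum>z\<in>S. pmf \<pi> z * pmf (kernel_iter K t z) y)" for t
    using pmf_bind_finite_support[OF finite_S assms(1)] bind_kernel_iter_stationary[OF assms(2)]
    by metis
  moreover have "(\<lambda>t. \<Sum>z\<in>S. pmf \<pi> z * pmf (kernel_iter K t z) y) \<longlonglongrightarrow> (\<Sum>z\<in>S. pmf \<pi> z * limit_dist y)"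
    by (intro tendsto_sum tendsto_mult_left tendsto_limit_dist)
  ultimately show "pmf \<pi> y = pmf stationary_dist y"
    using sum_pmf_eq_1[OF finite_S assms(1)]
    by (simp add: pmf_stationary_dist LIMSEQ_const_iff flip: sum_distrib_right)
qed

end

theorem (in finite_markov) converges_to_unique_stationary:
  assumes "z0 \<in> S" "z0 \<in> set_pmf (K z0)" "\<And>x. x \<in> S \<Longrightarrow> (x, z0) \<in> (support_rel K)\<^sup>*"
  shows "\<exists>\<pi>. (set_pmf \<pi> \<subseteq> S \<and> bind_pmf \<pi> K = \<pi>) \<and>
    (\<forall>\<pi>'. set_pmf \<pi>' \<subseteq> S \<and> bind_pmf \<pi>' K = \<pi>' \<longrightarrow> \<pi>' = \<pi>) \<and>
    (\<forall>\<xi>\<in>S. \<forall>\<eta>\<in>S. (\<lambda>t. pmf (kernel_iter K t \<eta>) \<xi>) \<longlonglongrightarrow> pmf \<pi> \<xi>)"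
proof -
  obtain k where "\<And>x. x \<in> S \<Longrightarrow> z0 \<in> set_pmf (kernel_iter K k x)"
    using uniform_hitting_time assms(2,3) by blast
  then interpret doeblin S K z0 k
    by unfold_locales (use assms(1) in auto)
  show ?thesis
  proof (intro exI[of _ stationary_dist] conjI allI impI ballI)
    show "\<pi>' = stationary_dist" if "set_pmf \<pi>' \<subseteq> S \<and> bind_pmf \<pi>' K = \<pi>'" for \<pi>'
      using that by (blast intro: stationary_dist_unique)
    show "(\<lambda>t. pmf (kernel_iter K t \<eta>) \<xi>) \<longlonglongrightarrow> pmf stationary_dist \<xi>" if "\<eta> \<in> S" for \<xi> \<eta>
      unfolding pmf_stationary_dist using that by (rule tendsto_limit_dist)
  qed (fact set_pmf_stationary_dist bind_stationary_dist)+
qed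

section \<open>The immediate exchange model\<close>

lemma finite_connected_graph_finite_edges:
  assumes "finite_connected_graph V E"
  shows "finite E"
proof (rule finite_subset)
  show "E \<subseteq> V \<times> V" "finite (V \<times> V)"
    using assms by (auto simp: finite_connected_graph_def)
qed

lemma ie_law_eq_kernel_iter: "ie_law E t \<eta> = kernel_iter (ie_step E) t \<eta>"
  by (induction t) simp_all

lemma sum_fun_upd_add:
  fixes f :: "'b \<Rightarrow> 'c::comm_monoid_add"
  assumes "finite V" "x \<in> V"
  shows "sum (f(x := a)) V + f x = sum f V + a"
proof -
  have "sum (f(x := a)) (V - {x}) = sum f (V - {x})"
    by (rule sum.cong) auto
  then show ?thesis
    using assms by (simp add: sum.remove ac_simps)
qed

lemma finite_configs:
  assumes "finite V"
  shows "finite (configs V M)"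
proof (rule finite_subset)
  show "configs V M \<subseteq> (\<lambda>g x. if x \<in> V then g x else 0) ` PiE V (\<lambda>_. {..M})"
  proof
    fix \<xi> assume \<xi>: "\<xi> \<in> configs V M"
    have "\<xi> x \<le> M" if "x \<in> V" for x
      using \<xi> member_le_sum[of x V \<xi>] assms that by (auto simp: configs_def)
    then have "restrict \<xi> V \<in> PiE V (\<lambda>_. {..M})" by auto
    moreover have "\<xi> = (\<lambda>x. if x \<in> V then restrict \<xi> V x else 0)"
      using \<xi> by (auto simp: configs_def)
    ultimately show "\<xi> \<in> (\<lambda>g x. if x \<in> V then g x else 0) ` PiE V (\<lambda>_. {..M})" by blast
  qed
qed (use assms in \<open>simp add: finite_PiE\<close>)

lemma set_pmf_ie_step:
  assumes "finite E" "E \<noteq> {}"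
  shows "set_pmf (ie_step E \<xi>) = (\<Union>(x, y)\<in>E. \<Union>u1\<in>{0..\<xi> x}. \<Union>u2\<in>{0..\<xi> y}.
          {\<xi>(x := \<xi> x - u1 + u2, y := \<xi> y - u2 + u1)})"
  using assms unfolding ie_step_def by (simp add: set_pmf_of_set split_beta)

lemma exchange_in_set_pmf_ie_step:
  assumes "finite E" "(x, y) \<in> E" "u1 \<le> \<xi> x" "u2 \<le> \<xi> y"
  shows "\<xi>(x := \<xi> x - u1 + u2, y := \<xi> y - u2 + u1) \<in> set_pmf (ie_step E \<xi>)"
  using assms by (subst set_pmf_ie_step) force+

lemma ie_step_configs:
  assumes G: "finite_connected_graph V E" and \<xi>: "\<xi> \<in> configs V M"
  shows "set_pmf (ie_step E \<xi>) \<subseteq> configs V M"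
proof (cases "E = {}")
  case True
  then show ?thesis using \<xi> by (simp add: ie_step_def)
next
  case False
  have fV: "finite V" and EV: "E \<subseteq> V \<times> V" and irr: "\<And>x. (x, x) \<notin> E"
    using G by (auto simp: finite_connected_graph_def)
  have fE: "finite E" by (rule finite_connected_graph_finite_edges[OF G])
  show ?thesis
  proof
    fix \<zeta> assume "\<zeta> \<in> set_pmf (ie_step E \<xi>)"
    then obtain x y u1 u2 where \<zeta>: "\<zeta> = \<xi>(x := \<xi> x - u1 + u2, y := \<xi> y - u2 + u1)"
      and xy: "(x, y) \<in> E" and u: "u1 \<le> \<xi> x" "u2 \<le> \<xi> y"
      unfolding set_pmf_ie_step[OF fE False] by (auto simp del: fun_upd_apply)
    have xV: "x \<in> V" and yV: "y \<in> V" and "x \<noteq> y" using xy EV irr by auto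
    then have "sum \<zeta> V = sum \<xi> V"
      using sum_fun_upd_add[OF fV xV, of \<xi> "\<xi> x - u1 + u2"]
        sum_fun_upd_add[OF fV yV, of "\<xi>(x := \<xi> x - u1 + u2)" "\<xi> y - u2 + u1"] u
      unfolding \<zeta> by simp
    then show "\<zeta> \<in> configs V M" using \<xi> xV yV unfolding \<zeta> configs_def by auto
  qed
qed

lemma ie_step_lazy:
  assumes "finite E"
  shows "\<xi> \<in> set_pmf (ie_step E \<xi>)"
proof (cases "E = {}")
  case True
  then show ?thesis by (simp add: ie_step_def)
next
  case False
  then obtain x y where "(x, y) \<in> E" by auto
  from exchange_in_set_pmf_ie_step[OF assms this, of 0 \<xi> 0] show ?thesis by simp
qed

definition move_unit :: "('a \<Rightarrow> nat) \<Rightarrow> 'a \<Rightarrow> 'a \<Rightarrow> 'a \<Rightarrow> nat" where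
  "move_unit \<xi> x y = (\<lambda>z. \<xi> z - (if z = x then 1 else 0) + (if z = y then 1 else 0))"

lemma move_unit_reachable:
  assumes G: "finite_connected_graph V E" and xy: "(x, y) \<in> E\<^sup>*" and x: "1 \<le> \<xi> x"
  shows "(\<xi>, move_unit \<xi> x y) \<in> (support_rel (ie_step E))\<^sup>*"
  using xy
proof (induction rule: rtrancl_induct)
  case base
  have "move_unit \<xi> x x = \<xi>" using x by (auto simp: move_unit_def)
  then show ?case by simp
next
  case (step y w)
  have fE: "finite E" by (rule finite_connected_graph_finite_edges[OF G])
  have "y \<noteq> w" using G step(2) by (auto simp: finite_connected_graph_def)
  let ?\<eta> = "move_unit \<xi> x y"
  have "?\<eta> y \<ge> 1" using x by (auto simp: move_unit_def)
  then have "?\<eta>(y := ?\<eta> y - 1 + 0, w := ?\<eta> w - 0 + 1) \<in> set_pmf (ie_step E ?\<eta>)"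
    by (intro exchange_in_set_pmf_ie_step[OF fE step(2)]) auto
  moreover have "?\<eta>(y := ?\<eta> y - 1 + 0, w := ?\<eta> w - 0 + 1) = move_unit \<xi> x w"
    using \<open>y \<noteq> w\<close> x by (auto simp: move_unit_def)
  ultimately have "(?\<eta>, move_unit \<xi> x w) \<in> support_rel (ie_step E)"
    by (simp add: support_rel_def)
  then show ?case using step(3) by simp
qed

definition concentrated :: "'a \<Rightarrow> nat \<Rightarrow> 'a \<Rightarrow> nat" where
  "concentrated v M = (\<lambda>z. if z = v then M else 0)"

lemma concentrated_in_configs: "finite V \<Longrightarrow> v \<in> V \<Longrightarrow> concentrated v M \<in> configs V M"
  by (auto simp: concentrated_def configs_def sum.delta)

lemma config_eq_concentrated:
  assumes "finite V" "v \<in> V" "\<xi> \<in> configs V M" "\<xi> v = M"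
  shows "\<xi> = concentrated v M"
proof -
  have "sum \<xi> V = \<xi> v + sum \<xi> (V - {v})"
    using assms(1,2) by (simp add: sum.remove)
  then have "\<forall>x\<in>V - {v}. \<xi> x = 0"
    using assms by (simp add: configs_def)
  with assms(3,4) show ?thesis
    by (intro ext) (auto simp: concentrated_def configs_def)
qed

lemma reaches_concentrated:
  assumes G: "finite_connected_graph V E" and v: "v \<in> V"
  shows "\<xi> \<in> configs V M \<Longrightarrow> (\<xi>, concentrated v M) \<in> (support_rel (ie_step E))\<^sup>*"
proof (induction "M - \<xi> v" arbitrary: \<xi>)
  case 0
  have fV: "finite V" using G by (simp add: finite_connected_graph_def)
  have "\<xi> v \<le> M"
    using member_le_sum[of v V \<xi>] fV v 0(2) by (simp add: configs_def)
  with 0(1) have "\<xi> v = M" by arith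
  then have "\<xi> = concentrated v M"
    by (rule config_eq_concentrated[OF fV v 0(2)])
  then show ?case by simp
next
  case (Suc n)
  have fV: "finite V" and conn: "\<And>x. x \<in> V \<Longrightarrow> (x, v) \<in> E\<^sup>*"
    using G v by (auto simp: finite_connected_graph_def)
  have "sum \<xi> V = M"
    using Suc(3) by (simp add: configs_def)
  moreover have "sum \<xi> V = \<xi> v + sum \<xi> (V - {v})"
    using fV v by (simp add: sum.remove)
  ultimately have "sum \<xi> (V - {v}) \<noteq> 0"
    using Suc(2) by arith
  then obtain x where x: "x \<in> V - {v}" "\<xi> x \<noteq> 0"
    by (meson sum.neutral)
  have step: "(\<xi>, move_unit \<xi> x v) \<in> (support_rel (ie_step E))\<^sup>*"
    using x by (intro move_unit_reachable[OF G conn]) auto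
  have "move_unit \<xi> x v \<in> configs V M"
    using ie_step_configs[OF G] step Suc(3) by (rule support_rel_rtrancl_closed)
  moreover have "move_unit \<xi> x v v = Suc (\<xi> v)"
    using x(1) by (auto simp: move_unit_def)
  with Suc(2) have "n = M - move_unit \<xi> x v v"
    by arith
  ultimately show ?case
    using Suc(1) rtrancl_trans[OF step] by blast
qed

theorem lemma3:
  fixes V :: "'a set" and E :: "('a \<times> 'a) set" and M :: nat
  assumes "finite_connected_graph V E"
  shows "\<exists>\<pi>. ie_stationary V E M \<pi> \<and> (\<forall>\<pi>'. ie_stationary V E M \<pi>' \<longrightarrow> \<pi>' = \<pi>) \<and>
           (\<forall>\<xi>\<in>configs V M. \<forall>\<eta>\<in>configs V M.
              (\<lambda>t. pmf (ie_law E t \<eta>) \<xi>) \<longlonglongrightarrow> pmf \<pi> \<xi>)"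
proof -
  have fV: "finite V" and "V \<noteq> {}"
    using assms by (auto simp: finite_connected_graph_def)
  then obtain v where v: "v \<in> V" by blast
  interpret finite_markov "configs V M" "ie_step E"
    using finite_configs[OF fV] ie_step_configs[OF assms] by unfold_locales
  have "\<exists>\<pi>. (set_pmf \<pi> \<subseteq> configs V M \<and> bind_pmf \<pi> (ie_step E) = \<pi>) \<and>
      (\<forall>\<pi>'. set_pmf \<pi>' \<subseteq> configs V M \<and> bind_pmf \<pi>' (ie_step E) = \<pi>' \<longrightarrow> \<pi>' = \<pi>) \<and>
      (\<forall>\<xi>\<in>configs V M. \<forall>\<eta>\<in>configs V M.
         (\<lambda>t. pmf (kernel_iter (ie_step E) t \<eta>) \<xi>) \<longlonglongrightarrow> pmf \<pi> \<xi>)"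
    using concentrated_in_configs[OF fV v]
      ie_step_lazy[OF finite_connected_graph_finite_edges[OF assms]]
      reaches_concentrated[OF assms v]
    by (rule converges_to_unique_stationary)
  then show ?thesis
    unfolding ie_stationary_def ie_law_eq_kernel_iter .
qed

end
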